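(* Suppose $\mathit{Act}$ is infinite. Then $\mathcal{E}_v'$ is complete for $\simeq$ over open monitors: for all monitors $m,n$ (possibly containing variables), if $m\simeq n$ then $\mathcal{E}_v'\vdash m=n$.
   Context: Monitors: terms $m,n ::= v \mid a.m \mid m+n \mid x$ over an action set $\mathit{Act}$ ($a\in\mathit{Act}$) and a countably infinite variable set $\mathit{Var}$, verdicts $v::=\mathit{end}\mid\mathit{yes}\mid\mathit{no}$; closed monitors contain no variables; a closed substitution maps variables to closed monitors. Transitions $\xrightarrow{\alpha}$, $\alpha\in\mathit{Act}\cup\{\tau\}$ ($\tau\notin\mathit{Act}$): least relation with $a.m\xrightarrow{a}m$; $m\xrightarrow{\alpha}m'$ implies $m+n\xrightarrow{\alpha}m'$ and $n+m\xrightarrow{\alpha}m'$; $v\xrightarrow{\alpha}v$ for each verdict $v$. Weak transitions: $m\xRightarrow{\varepsilon}m'$ iff $m(\xrightarrow{\tau})^*m'$; $m\xRightarrow{a}m'$ iff $m\xRightarrow{\varepsilon}\xrightarrow{a}\xRightarrow{\varepsilon}m'$; $m\xRightarrow{as'}m'$ ($s'\neq\varepsilon$) iff $m\xRightarrow{a}m_1\xRightarrow{s'}m'$. For closed $m$: $L_a(m)=\{s\mid m\xRightarrow{s}\mathit{yes}\}$, $L_r(m)=\{s\mid m\xRightarrow{s}\mathit{no}\}$; closed $m\simeq n$ iff $L_a(m)=L_a(n)$ and $L_r(m)=L_r(n)$; for open monitors $m\simeq n$ iff $\sigma(m)\simeq\sigma(n)$ for all closed substitutions $\sigma$. $\mathcal{E}\vdash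 m=n$ denotes derivability by reflexivity, symmetry, transitivity, substitution (from $t=t'$ infer $\sigma(t)=\sigma(t')$ for any substitution) and congruence for $a.\_$ and $+$. $\mathcal{E}_v$ consists of (A1) $x+y=y+x$; (A2) $x+(y+z)=(x+y)+z$; (A3) $x+x=x$; (A4) $x+\mathit{end}=x$; and, for each $a\in\mathit{Act}$, ($E_a$) $a.\mathit{end}=\mathit{end}$; ($Y_a$) $\mathit{yes}=\mathit{yes}+a.\mathit{yes}$; ($N_a$) $\mathit{no}=\mathit{no}+a.\mathit{no}$; ($D_a$) $a.(x+y)=a.x+a.y$. $\mathcal{E}_v'=\mathcal{E}_v\cup\{O1\}$ where (O1) $\mathit{yes}+\mathit{no}=\mathit{yes}+\mathit{no}+x$. *)

theory Defs
  imports Main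
begin

datatype verdict = End | Yes | No

datatype 'a mon = V verdict | Pre 'a "'a mon" | Plus "'a mon" "'a mon" | Var nat

fun vars :: "'a mon \<Rightarrow> nat set" where
  "vars (V v) = {}"
| "vars (Pre a m) = vars m"
| "vars (Plus m n) = vars m \<union> vars n"
| "vars (Var x) = {x}"

definition closed :: "'a mon \<Rightarrow> bool" where
  "closed m \<longleftrightarrow> vars m = {}"

fun subst :: "(nat \<Rightarrow> 'a mon) \<Rightarrow> 'a mon \<Rightarrow> 'a mon" where
  "subst \<sigma> (V v) = V v"
| "subst \<sigma> (Pre a m) = Pre a (subst \<sigma> m)"
| "subst \<sigma> (Plus m n) = Plus (subst \<sigma> m) (subst \<sigma> n)"
| "subst \<sigma> (Var x) = \<sigma> x"

definition closed_subst :: "(nat \<Rightarrow> 'a mon) \<Rightarrow> bool" where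
  "closed_subst \<sigma> \<longleftrightarrow> (\<forall>x. closed (\<sigma> x))"

text \<open>Labels: Some a for an action a, None for tau.\<close>
inductive step :: "'a mon \<Rightarrow> 'a option \<Rightarrow> 'a mon \<Rightarrow> bool" where
  act: "step (Pre a m) (Some a) m"
| suml: "step m \<alpha> m' \<Longrightarrow> step (Plus m n) \<alpha> m'"
| sumr: "step m \<alpha> m' \<Longrightarrow> step (Plus n m) \<alpha> m'"
| verd: "step (V v) \<alpha> (V v)"

definition tau_star :: "'a mon \<Rightarrow> 'a mon \<Rightarrow> bool" where
  "tau_star = (\<lambda>m m'. step m None m')\<^sup>*\<^sup>*"

fun weak :: "'a mon \<Rightarrow> 'a list \<Rightarrow> 'a mon \<Rightarrow> bool" where
  "weak m [] m' \<longleftrightarrow> tau_star m m'"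
| "weak m (a # s) m' \<longleftrightarrow>
     (\<exists>m1 m2 m3. tau_star m m1 \<and> step m1 (Some a) m2 \<and> tau_star m2 m3 \<and> weak m3 s m')"

definition La :: "'a mon \<Rightarrow> 'a list set" where
  "La m = {s. weak m s (V Yes)}"

definition Lr :: "'a mon \<Rightarrow> 'a list set" where
  "Lr m = {s. weak m s (V No)}"

definition closed_equiv :: "'a mon \<Rightarrow> 'a mon \<Rightarrow> bool" where
  "closed_equiv m n \<longleftrightarrow> La m = La n \<and> Lr m = Lr n"

definition mon_equiv :: "'a mon \<Rightarrow> 'a mon \<Rightarrow> bool" where
  "mon_equiv m n \<longleftrightarrow> (\<forall>\<sigma>. closed_subst \<sigma> \<longrightarrow> closed_equiv (subst \<sigma> m) (subst \<sigma> n))"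

text \<open>The axioms of E_v' (E_v plus O1), with variables x=0, y=1, z=2.\<close>
inductive axiom :: "'a mon \<Rightarrow> 'a mon \<Rightarrow> bool" where
  A1: "axiom (Plus (Var 0) (Var 1)) (Plus (Var 1) (Var 0))"
| A2: "axiom (Plus (Var 0) (Plus (Var 1) (Var 2))) (Plus (Plus (Var 0) (Var 1)) (Var 2))"
| A3: "axiom (Plus (Var 0) (Var 0)) (Var 0)"
| A4: "axiom (Plus (Var 0) (V End)) (Var 0)"
| E: "axiom (Pre a (V End)) (V End)"
| Y: "axiom (V Yes) (Plus (V Yes) (Pre a (V Yes)))"
| N: "axiom (V No) (Plus (V No) (Pre a (V No)))"
| D: "axiom (Pre a (Plus (Var 0) (Var 1))) (Plus (Pre a (Var 0)) (Pre a (Var 1)))"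
| O1: "axiom (Plus (V Yes) (V No)) (Plus (Plus (V Yes) (V No)) (Var 0))"

inductive derivable :: "('a mon \<Rightarrow> 'a mon \<Rightarrow> bool) \<Rightarrow> 'a mon \<Rightarrow> 'a mon \<Rightarrow> bool" for E where
  ax: "E t t' \<Longrightarrow> derivable E t t'"
| refl: "derivable E t t"
| sym: "derivable E t t' \<Longrightarrow> derivable E t' t"
| trans: "derivable E t t' \<Longrightarrow> derivable E t' t'' \<Longrightarrow> derivable E t t''"
| subst: "derivable E t t' \<Longrightarrow> derivable E (subst \<sigma> t) (subst \<sigma> t')"
| pre: "derivable E t t' \<Longrightarrow> derivable E (Pre a t) (Pre a t')"
| plus: "derivable E t1 t1' \<Longrightarrow> derivable E t2 t2' \<Longrightarrow> derivable E (Plus t1 t2) (Plus t1' t2')"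

end

theory Submission
  imports Defs "HOL-Library.Sublist"
begin

text \<open>Provable equality turns monitors into a join-semilattice, ordered by
  \<open>m \<sqsubseteq> n \<longleftrightarrow> n = n + m\<close>. By (D) and (E) every monitor is provably the join of its
  paths \<open>a\<^sub>1.\<dots>.a\<^sub>k.l\<close>, whose leaf l is yes, no or a variable; so it suffices to show that every
  path of m lies below n when \<open>m \<simeq> n\<close>. For a verdict path \<open>s.v\<close>, substitute end for all
  variables: then n also reaches v along s, hence has a path \<open>s'.v\<close> with s' a prefix of s, and
  \<open>s'.v\<close> absorbs \<open>s.v\<close> by (Y) and (N). For a variable path \<open>s.x\<close>, pick an action b occurring
  neither in s nor in n (Act is infinite) and substitute \<open>b.v\<close> for x. Either n has the path
  \<open>s.x\<close> itself, or n reaches both yes and no along prefixes of s; in the latter case the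
  absorption of everything by yes + no (O1) puts \<open>s.x\<close> below n.\<close>

abbreviation provable :: "'a mon \<Rightarrow> 'a mon \<Rightarrow> bool" (infix "=\<^sub>E" 50) where
  "m =\<^sub>E n \<equiv> derivable axiom m n"

lemmas provable_trans [trans] = derivable.trans[of axiom]

lemma provable_axiom: "axiom l r \<Longrightarrow> subst \<sigma> l =\<^sub>E subst \<sigma> r"
  by (rule derivable.subst[OF derivable.ax])

lemma E_plus_commute: "Plus m n =\<^sub>E Plus n m"
  using provable_axiom[OF axiom.A1, of "\<lambda>i. [m, n] ! i"] by simp

lemma E_plus_assoc: "Plus m (Plus n k) =\<^sub>E Plus (Plus m n) k"
  using provable_axiom[OF axiom.A2, of "\<lambda>i. [m, n, k] ! i"] by simp

lemma E_plus_idem: "Plus m m =\<^sub>E m"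
  using provable_axiom[OF axiom.A3, of "\<lambda>_. m"] by simp

lemma E_plus_end: "Plus m (V End) =\<^sub>E m"
  using provable_axiom[OF axiom.A4, of "\<lambda>_. m"] by simp

lemma E_pre_plus: "Pre a (Plus m n) =\<^sub>E Plus (Pre a m) (Pre a n)"
  using provable_axiom[OF axiom.D, of "\<lambda>i. [m, n] ! i"] by simp

definition below :: "'a mon \<Rightarrow> 'a mon \<Rightarrow> bool" (infix "\<sqsubseteq>" 50) where
  "m \<sqsubseteq> n \<longleftrightarrow> n =\<^sub>E Plus n m"

lemma below_antisym: "m \<sqsubseteq> n \<Longrightarrow> n \<sqsubseteq> m \<Longrightarrow> m =\<^sub>E n"
  unfolding below_def
  by (blast intro: derivable.trans[OF _ derivable.trans[OF E_plus_commute derivable.sym]])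

lemma below_trans [trans]:
  assumes "m \<sqsubseteq> n" and "n \<sqsubseteq> k"
  shows "m \<sqsubseteq> k"
proof -
  have "k =\<^sub>E Plus k n"
    using assms(2) by (simp add: below_def)
  also have "\<dots> =\<^sub>E Plus k (Plus n m)"
    using assms(1) by (simp add: below_def derivable.plus derivable.refl)
  also have "\<dots> =\<^sub>E Plus (Plus k n) m"
    by (rule E_plus_assoc)
  also have "\<dots> =\<^sub>E Plus k m"
    using assms(2) by (simp add: below_def derivable.plus derivable.refl derivable.sym)
  finally show ?thesis
    unfolding below_def .
qed

lemma below_if_provable: "m =\<^sub>E n \<Longrightarrow> m \<sqsubseteq> n"
  unfolding below_def
  by (meson E_plus_idem derivable.plus derivable.refl derivable.sym derivable.trans)

lemma below_plus_left: "m \<sqsubseteq> Plus m k"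
proof -
  have "Plus m k =\<^sub>E Plus (Plus m m) k"
    by (simp add: E_plus_idem derivable.plus derivable.refl derivable.sym)
  also have "\<dots> =\<^sub>E Plus m (Plus m k)"
    by (rule derivable.sym[OF E_plus_assoc])
  also have "\<dots> =\<^sub>E Plus (Plus m k) m"
    by (rule E_plus_commute)
  finally show ?thesis
    unfolding below_def .
qed

lemma below_plus_right: "k \<sqsubseteq> Plus m k"
  using below_trans[OF below_plus_left below_if_provable[OF E_plus_commute]] .

lemma plus_below:
  assumes "m \<sqsubseteq> n" and "k \<sqsubseteq> n"
  shows "Plus m k \<sqsubseteq> n"
proof -
  have "n =\<^sub>E Plus n m"
    using assms(1) by (simp add: below_def)
  also have "\<dots> =\<^sub>E Plus (Plus n k) m"
    using assms(2) by (simp add: below_def derivable.plus derivable.refl)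
  also have "\<dots> =\<^sub>E Plus n (Plus k m)"
    by (rule derivable.sym[OF E_plus_assoc])
  also have "\<dots> =\<^sub>E Plus n (Plus m k)"
    by (simp add: E_plus_commute derivable.plus derivable.refl)
  finally show ?thesis
    unfolding below_def .
qed

lemma end_below: "V End \<sqsubseteq> m"
  unfolding below_def by (rule derivable.sym[OF E_plus_end])

lemma below_yes_no: "m \<sqsubseteq> Plus (V Yes) (V No)"
  using provable_axiom[OF axiom.O1, of "\<lambda>_. m"] by (simp add: below_def)

lemma pre_mono: "m \<sqsubseteq> n \<Longrightarrow> Pre a m \<sqsubseteq> Pre a n"
  unfolding below_def by (blast intro: derivable.trans[OF derivable.pre E_pre_plus])

lemma pre_verdict_below: "v = Yes \<or> v = No \<Longrightarrow> Pre a (V v) \<sqsubseteq> V v"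
  unfolding below_def by (auto intro: derivable.ax axiom.Y axiom.N)

abbreviation pres :: "'a list \<Rightarrow> 'a mon \<Rightarrow> 'a mon" where
  "pres s m \<equiv> foldr Pre s m"

lemma pres_mono: "m \<sqsubseteq> n \<Longrightarrow> pres s m \<sqsubseteq> pres s n"
  by (induction s) (auto intro: pre_mono)

lemma pres_end: "pres s (V End) =\<^sub>E V End"
  by (induction s)
    (auto intro: derivable.refl derivable.trans[OF derivable.pre derivable.ax[of axiom, OF axiom.E]])

lemma pres_plus: "pres s (Plus m n) =\<^sub>E Plus (pres s m) (pres s n)"
  by (induction s) (auto intro: derivable.refl derivable.trans[OF derivable.pre E_pre_plus])

lemma pres_verdict_below: "v = Yes \<or> v = No \<Longrightarrow> pres s (V v) \<sqsubseteq> V v"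
  by (induction s)
    (auto intro: below_if_provable derivable.refl below_trans[OF pre_mono pre_verdict_below])

lemma pres_verdict_antimono:
  assumes "v = Yes \<or> v = No" and "prefix s' s"
  shows "pres s (V v) \<sqsubseteq> pres s' (V v)"
proof -
  obtain t where "s = s' @ t"
    using assms(2) prefixE by blast
  then show ?thesis
    using pres_mono[OF pres_verdict_below[OF assms(1), of t], of s'] by simp
qed

lemma pres_below_if_yes_no_below:
  assumes "prefix s1 s" and "prefix s2 s"
    and "pres s1 (V Yes) \<sqsubseteq> n" and "pres s2 (V No) \<sqsubseteq> n"
  shows "pres s m \<sqsubseteq> n"
proof -
  obtain s' where s': "prefix s1 s'" "prefix s2 s'" "prefix s' s"
    using prefix_same_cases[OF assms(1,2)] assms(1,2) by blast
  obtain t where s: "s = s' @ t"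
    using s'(3) prefixE by blast
  have "pres s m = pres s' (pres t m)"
    using s by simp
  also have "\<dots> \<sqsubseteq> pres s' (Plus (V Yes) (V No))"
    by (rule pres_mono[OF below_yes_no])
  also have "\<dots> \<sqsubseteq> Plus (pres s' (V Yes)) (pres s' (V No))"
    by (rule below_if_provable[OF pres_plus])
  also have "\<dots> \<sqsubseteq> n"
    using below_trans[OF pres_verdict_antimono[OF _ s'(1)] assms(3)]
      below_trans[OF pres_verdict_antimono[OF _ s'(2)] assms(4)]
    by (simp add: plus_below)
  finally show ?thesis .
qed

fun paths :: "'a mon \<Rightarrow> ('a list \<times> 'a mon) set" where
  "paths (V End) = {}"
| "paths (V v) = {([], V v)}"
| "paths (Pre a m) = {(a # s, l) | s l. (s, l) \<in> paths m}"
| "paths (Plus m n) = paths m \<union> paths n"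
| "paths (Var x) = {([], Var x)}"

lemma paths_below: "(s, l) \<in> paths m \<Longrightarrow> pres s l \<sqsubseteq> m"
proof (induction m arbitrary: s rule: paths.induct)
  case (3 a m)
  then obtain s' where "s = a # s'" and "(s', l) \<in> paths m"
    by auto
  then show ?case
    by (simp add: pre_mono 3)
qed (auto intro: below_if_provable derivable.refl
      below_trans[OF _ below_plus_left] below_trans[OF _ below_plus_right])

lemma pres_below_if_paths_below:
  "(\<And>s l. (s, l) \<in> paths m \<Longrightarrow> pres (t @ s) l \<sqsubseteq> n) \<Longrightarrow> pres t m \<sqsubseteq> n"
proof (induction m arbitrary: t rule: paths.induct)
  case 1
  show ?case
    using below_if_provable[OF pres_end] end_below by (rule below_trans)
next
  case (3 a m)
  have "pres (t @ [a]) m \<sqsubseteq> n"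
  proof (rule "3.IH")
    fix s l
    assume "(s, l) \<in> paths m"
    then show "pres ((t @ [a]) @ s) l \<sqsubseteq> n"
      using "3.prems"[of "a # s" l] by simp
  qed
  then show ?case
    by simp
next
  case (4 m k)
  then have "Plus (pres t m) (pres t k) \<sqsubseteq> n"
    by (auto intro: plus_below)
  with below_if_provable[OF pres_plus] show ?case
    by (rule below_trans)
qed auto

lemma below_if_paths_below: "(\<And>s l. (s, l) \<in> paths m \<Longrightarrow> pres s l \<sqsubseteq> n) \<Longrightarrow> m \<sqsubseteq> n"
  using pres_below_if_paths_below[of m "[]" n] by simp

lemma paths_leaf: "(s, l) \<in> paths m \<Longrightarrow> l = V Yes \<or> l = V No \<or> (\<exists>x. l = Var x)"
  by (induction m arbitrary: s rule: paths.induct) auto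

lemma paths_subst:
  "(u, l) \<in> paths (subst \<sigma> m) \<longleftrightarrow>
     (\<exists>v. l = V v \<and> (u, l) \<in> paths m) \<or>
     (\<exists>s t x. u = s @ t \<and> (s, Var x) \<in> paths m \<and> (t, l) \<in> paths (\<sigma> x))"
  (is "?lhs m u \<longleftrightarrow> ?rhs m u")
proof (induction m arbitrary: u rule: paths.induct)
  case (3 a m)
  show ?case
  proof
    assume "?lhs (Pre a m) u"
    then obtain u' where u: "u = a # u'" and "(u', l) \<in> paths (subst \<sigma> m)"
      by auto
    then consider (verdict) "\<exists>v. l = V v \<and> (u', l) \<in> paths m"
      | (var) s t x where "u' = s @ t" "(s, Var x) \<in> paths m" "(t, l) \<in> paths (\<sigma> x)"
      using 3 by blast
    then show "?rhs (Pre a m) u"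
    proof cases
      case verdict
      then show ?thesis
        using u by auto
    next
      case var
      then show ?thesis
        using u by (intro disjI2 exI[of _ "a # s"] exI[of _ t] exI[of _ x]) auto
    qed
  next
    assume "?rhs (Pre a m) u"
    then show "?lhs (Pre a m) u"
      using 3 by auto
  qed
next
  case (4 m n)
  show ?case
    unfolding subst.simps paths.simps Un_iff 4 conj_disj_distribL ex_disj_distrib by blast
qed auto

fun acts :: "'a mon \<Rightarrow> 'a set" where
  "acts (Pre a m) = insert a (acts m)"
| "acts (Plus m n) = acts m \<union> acts n"
| "acts _ = {}"

lemma finite_acts: "finite (acts m)"
  by (induction m) auto

lemma paths_acts: "(s, l) \<in> paths m \<Longrightarrow> set s \<subseteq> acts m"
  by (induction m arbitrary: s rule: paths.induct) fastforce+

fun summands :: "'a mon \<Rightarrow> 'a mon set" where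
  "summands (Plus m n) = summands m \<union> summands n"
| "summands m = {m}"

lemma step_iff_summands:
  "step m \<alpha> m' \<longleftrightarrow>
     (\<exists>v. V v \<in> summands m \<and> m' = V v) \<or> (\<exists>a. \<alpha> = Some a \<and> Pre a m' \<in> summands m)"
proof
  assume "step m \<alpha> m'"
  then show "(\<exists>v. V v \<in> summands m \<and> m' = V v) \<or> (\<exists>a. \<alpha> = Some a \<and> Pre a m' \<in> summands m)"
    by induction auto
next
  assume "(\<exists>v. V v \<in> summands m \<and> m' = V v) \<or> (\<exists>a. \<alpha> = Some a \<and> Pre a m' \<in> summands m)"
  then show "step m \<alpha> m'"
    by (induction m) (auto intro: step.intros)
qed

lemma tau_star_iff_summands: "tau_star m m' \<longleftrightarrow> m' = m \<or> (\<exists>v. V v \<in> summands m \<and> m' = V v)"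
proof
  assume "tau_star m m'"
  then show "m' = m \<or> (\<exists>v. V v \<in> summands m \<and> m' = V v)"
    unfolding tau_star_def by induction (auto simp: step_iff_summands)
next
  assume "m' = m \<or> (\<exists>v. V v \<in> summands m \<and> m' = V v)"
  then show "tau_star m m'"
    unfolding tau_star_def by (auto intro: r_into_rtranclp simp: step_iff_summands)
qed

lemma weak_from_verdict: "weak (V v) u m' \<longleftrightarrow> m' = V v"
  by (induction u) (auto simp: tau_star_iff_summands step_iff_summands)

lemma tau_star_verdict_iff: "tau_star m (V v) \<longleftrightarrow> V v \<in> summands m"
  by (cases m) (auto simp: tau_star_iff_summands)

lemma weak_verdict_if_summand:
  assumes "V v \<in> summands m"
  shows "weak m u (V v)"
proof (cases u)
  case (Cons a u')
  have "tau_star m (V v)" and "step (V v) (Some a) (V v)" and "tau_star (V v) (V v)"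
    using assms by (auto simp: tau_star_verdict_iff intro: step.verd)
  moreover have "weak (V v) u' (V v)"
    by (simp add: weak_from_verdict)
  ultimately show ?thesis
    using Cons by auto
qed (use assms in \<open>simp add: tau_star_verdict_iff\<close>)

lemma weak_Cons_verdict:
  "weak m (a # u) (V v) \<longleftrightarrow>
     V v \<in> summands m \<or> (\<exists>m'. Pre a m' \<in> summands m \<and> weak m' u (V v))"
proof
  assume "weak m (a # u) (V v)"
  then obtain m1 m2 m3 where
    tau1: "tau_star m m1" and step: "step m1 (Some a) m2" and
    tau2: "tau_star m2 m3" and weak: "weak m3 u (V v)"
    by auto
  consider (verdict) w where "V w \<in> summands m" and "m2 = V w" | (pre) "Pre a m2 \<in> summands m"
    using tau1 step by (auto simp: tau_star_iff_summands step_iff_summands)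
  then show "V v \<in> summands m \<or> (\<exists>m'. Pre a m' \<in> summands m \<and> weak m' u (V v))"
  proof cases
    case verdict
    then show ?thesis
      using tau2 weak by (auto simp: tau_star_iff_summands weak_from_verdict)
  next
    case pre
    have "weak m2 u (V v)"
      using tau2 weak by (auto simp: tau_star_iff_summands weak_from_verdict weak_verdict_if_summand)
    with pre show ?thesis
      by blast
  qed
next
  assume "V v \<in> summands m \<or> (\<exists>m'. Pre a m' \<in> summands m \<and> weak m' u (V v))"
  then show "weak m (a # u) (V v)"
  proof
    assume "\<exists>m'. Pre a m' \<in> summands m \<and> weak m' u (V v)"
    then obtain m' where "step m (Some a) m'" and "weak m' u (V v)"
      by (auto simp: step_iff_summands)
    moreover have "tau_star m m" and "tau_star m' m'"
      by (simp_all add: tau_star_iff_summands)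
    ultimately show ?thesis
      by (simp only: weak.simps) blast
  qed (rule weak_verdict_if_summand)
qed

lemma paths_Nil_verdict: "v \<noteq> End \<Longrightarrow> ([], V v) \<in> paths m \<longleftrightarrow> V v \<in> summands m"
  by (induction m rule: paths.induct) auto

lemma paths_Cons: "(a # s, l) \<in> paths m \<longleftrightarrow> (\<exists>m'. Pre a m' \<in> summands m \<and> (s, l) \<in> paths m')"
  by (induction m rule: paths.induct) auto

lemma weak_verdict_iff_paths:
  "v \<noteq> End \<Longrightarrow> weak m u (V v) \<longleftrightarrow> (\<exists>s. prefix s u \<and> (s, V v) \<in> paths m)"
proof (induction u arbitrary: m)
  case Nil
  then show ?case
    by (simp add: tau_star_verdict_iff paths_Nil_verdict)
next
  case (Cons a u)
  have "weak m (a # u) (V v) \<longleftrightarrow>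
      V v \<in> summands m \<or> (\<exists>m'. Pre a m' \<in> summands m \<and> (\<exists>s. prefix s u \<and> (s, V v) \<in> paths m'))"
    by (simp only: weak_Cons_verdict Cons.IH[OF Cons.prems])
  also have "\<dots> \<longleftrightarrow> ([], V v) \<in> paths m \<or> (\<exists>s. prefix s u \<and> (a # s, V v) \<in> paths m)"
    by (auto simp: paths_Nil_verdict[OF Cons.prems] paths_Cons)
  also have "\<dots> \<longleftrightarrow> (\<exists>s. prefix s (a # u) \<and> (s, V v) \<in> paths m)"
    by (auto simp: prefix_Cons)
  finally show ?case .
qed

lemma mon_equiv_sym: "mon_equiv m n \<Longrightarrow> mon_equiv n m"
  unfolding mon_equiv_def closed_equiv_def by simp

lemma mon_equiv_verdict_pathE:
  assumes "mon_equiv m n" and "closed_subst \<sigma>" and "v = Yes \<or> v = No"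
    and "(u, V v) \<in> paths (subst \<sigma> m)"
  obtains s where "prefix s u" and "(s, V v) \<in> paths (subst \<sigma> n)"
proof -
  have "v \<noteq> End"
    using assms(3) by auto
  have "weak (subst \<sigma> m) u (V v)"
    using assms(4) weak_verdict_iff_paths[OF \<open>v \<noteq> End\<close>] by blast
  then have "weak (subst \<sigma> n) u (V v)"
    using assms(1-3) unfolding mon_equiv_def closed_equiv_def La_def Lr_def by blast
  then show ?thesis
    using that weak_verdict_iff_paths[OF \<open>v \<noteq> End\<close>] by blast
qed

lemma verdict_path_below:
  assumes "mon_equiv m n" and "v = Yes \<or> v = No" and "(s, V v) \<in> paths m"
  shows "pres s (V v) \<sqsubseteq> n"
proof -
  define \<sigma> :: "nat \<Rightarrow> 'a mon" where "\<sigma> = (\<lambda>_. V End)"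
  have "closed_subst \<sigma>"
    by (simp add: \<sigma>_def closed_subst_def closed_def)
  moreover have "(s, V v) \<in> paths (subst \<sigma> m)"
    using assms(3) by (simp add: paths_subst)
  ultimately obtain s' where "prefix s' s" and "(s', V v) \<in> paths (subst \<sigma> n)"
    using mon_equiv_verdict_pathE[OF assms(1) _ assms(2)] by blast
  moreover have "(s', V v) \<in> paths n"
    using calculation(2) by (simp add: paths_subst \<sigma>_def)
  ultimately show ?thesis
    using below_trans[OF pres_verdict_antimono[OF assms(2)] paths_below] by blast
qed

text \<open>As b does not occur in n, the only way for n to consume the final b of \<open>s @ [b]\<close> is
  through the substituted guard \<open>b.v\<close>, that is, at a leaf x reached along s.\<close>

lemma var_path_cases:
  assumes "mon_equiv m n" and "v = Yes \<or> v = No" and "(s, Var x) \<in> paths m"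
    and "b \<notin> set s" and "b \<notin> acts n"
  shows "(s, Var x) \<in> paths n \<or> (\<exists>s'. prefix s' s \<and> (s', V v) \<in> paths n)"
proof -
  define \<sigma> where "\<sigma> = (\<lambda>y. if y = x then Pre b (V v) else V End)"
  have "closed_subst \<sigma>"
    by (simp add: \<sigma>_def closed_subst_def closed_def)
  moreover have "(s @ [b], V v) \<in> paths (subst \<sigma> m)"
    using assms(2,3) by (auto simp: paths_subst \<sigma>_def)
  ultimately obtain u where u: "prefix u (s @ [b])" and "(u, V v) \<in> paths (subst \<sigma> n)"
    using mon_equiv_verdict_pathE[OF assms(1) _ assms(2)] by blast
  then consider (verdict) "(u, V v) \<in> paths n"
    | (var) s1 t y where "u = s1 @ t" "(s1, Var y) \<in> paths n" "(t, V v) \<in> paths (\<sigma> y)"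
    by (auto simp: paths_subst)
  then show ?thesis
  proof cases
    case verdict
    then have "u \<noteq> s @ [b]"
      using paths_acts assms(5) by fastforce
    with u verdict show ?thesis
      by (auto simp: prefix_snoc)
  next
    case var
    then have "y = x" and "u = s1 @ [b]"
      using assms(2) by (auto simp: \<sigma>_def split: if_splits)
    with u assms(4) have "s1 = s"
      by (auto dest: set_mono_prefix simp: prefix_snoc)
    with var \<open>y = x\<close> show ?thesis
      by simp
  qed
qed

lemma mon_equiv_below:
  assumes "infinite (UNIV :: 'a set)" and "mon_equiv m (n :: 'a mon)"
  shows "m \<sqsubseteq> n"
proof (rule below_if_paths_below)
  fix s l
  assume path: "(s, l) \<in> paths m"
  consider "l = V Yes" | "l = V No" | x where "l = Var x"
    using paths_leaf[OF path] by blast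
  then show "pres s l \<sqsubseteq> n"
  proof cases
    case (3 x)
    obtain b where "b \<notin> set s \<union> acts n"
      using ex_new_if_finite[OF assms(1)] finite_acts by (metis finite_Un finite_set)
    then have var_or_verdict:
      "(s, Var x) \<in> paths n \<or> (\<exists>s'. prefix s' s \<and> (s', V v) \<in> paths n)"
      if "v = Yes \<or> v = No" for v
      using var_path_cases[OF assms(2) that path[unfolded 3]] by blast
    show ?thesis
    proof (cases "(s, Var x) \<in> paths n")
      case True
      then show ?thesis
        using paths_below 3 by blast
    next
      case False
      then obtain s1 s2 where "prefix s1 s" "(s1, V Yes) \<in> paths n" "prefix s2 s" "(s2, V No) \<in> paths n"
        using var_or_verdict[of Yes] var_or_verdict[of No] by blast
      then show ?thesis
        using pres_below_if_yes_no_below paths_below by blast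
    qed
  qed (use verdict_path_below[OF assms(2)] path in blast)+
qed

theorem mainTheorem9:
  fixes m n :: "'a mon"
  assumes "infinite (UNIV :: 'a set)"
    and "mon_equiv m n"
  shows "derivable axiom m n"
proof -
  have "m \<sqsubseteq> n"
    using assms by (rule mon_equiv_below)
  moreover have "n \<sqsubseteq> m"
    using assms(1) mon_equiv_sym[OF assms(2)] by (rule mon_equiv_below)
  ultimately show ?thesis
    by (rule below_antisym)
qed

end
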